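(* Let $N$ be a finite nonempty set, $p\notin N$ and $N'=N\cup\{p\}$. Let $\mathscr{C}=\{S_1,\dots,S_k\}$ be a minimal balanced collection on $N$ with (unique) balancing weights $(\lambda_{S_i})_{i\in[k]}$. Let $I\subseteq[k]$ satisfy $\lambda_I:=\sum_{i\in I}\lambda_{S_i}<1$. Then $$\mathscr{C}'=\{S_i\cup\{p\}\mid i\in I\}\cup\{S_i\mid i\in[k]\setminus I\}\cup\{\{p\}\}$$ is a minimal balanced collection on $N'$ (with balancing weights $\lambda_{S_i}$ for the sets coming from $S_i$ and $1-\lambda_I$ for $\{p\}$).
   Context: For $T\subseteq N$, $\mathbf{1}^T\in\mathbb{R}^N$ denotes the characteristic vector of $T$. A collection $\mathscr{B}$ of nonempty subsets of a finite set $N$ is balanced if there exist positive weights $(\lambda_S)_{S\in\mathscr{B}}$ (balancing weights) with $\sum_{S\in\mathscr{B}}\lambda_S\mathbf{1}^S=\mathbf{1}^N$. A balanced collection is minimal if it contains no balanced proper subcollection; equivalently, its system of balancing weights is unique. $[k]=\{1,\dots,k\}$. *)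

theory Defs
  imports Main "HOL-Library.Indicator_Function"
begin

definition balancing_weights :: "'a set \<Rightarrow> 'a set set \<Rightarrow> ('a set \<Rightarrow> real) \<Rightarrow> bool" where
  "balancing_weights N B w \<longleftrightarrow>
     (\<forall>S\<in>B. w S > 0) \<and> (\<forall>i\<in>N. (\<Sum>S\<in>B. w S * indicator S i) = 1)"

definition balanced_on :: "'a set \<Rightarrow> 'a set set \<Rightarrow> bool" where
  "balanced_on N B \<longleftrightarrow> finite N \<and> (\<forall>S\<in>B. S \<noteq> {} \<and> S \<subseteq> N) \<and>
     (\<exists>w. balancing_weights N B w)"

definition minimal_balanced_on :: "'a set \<Rightarrow> 'a set set \<Rightarrow> bool" where
  "minimal_balanced_on N B \<longleftrightarrow> balanced_on N B \<and> (\<forall>B'. B' \<subset> B \<longrightarrow> \<not> balanced_on N B')"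

end

theory Submission
  imports Defs
begin

text \<open>Adding p to the sets S with S in A and adjoining the singleton {p} with
  weight 1 - lambda(A) balances the new collection on N plus p. If a proper subcollection were
  balanced, deleting p from its members (and dropping {p}) would give a balanced subcollection of
  the original collection, hence all of it by minimality; uniqueness of the balancing weights
  then forces the weight of the lifted sets at p to be lambda(A) < 1, so {p} must have been kept,
  and the subcollection is not proper.\<close>

lemma balanced_on_finite_collection:
  assumes "balanced_on N B"
  shows "finite B"
proof (rule finite_subset)
  show "B \<subseteq> Pow N" using assms unfolding balanced_on_def by auto
  show "finite (Pow N)" using assms unfolding balanced_on_def by simp
qed

lemma balancing_weights_positive_part:
  assumes "finite B" and "\<And>S. S \<in> B \<Longrightarrow> v S \<ge> 0"
    and "\<And>x. x \<in> N \<Longrightarrow> (\<Sum>S\<in>B. v S * indicator S x) = 1"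
  shows "balancing_weights N {S\<in>B. v S > 0} v"
  unfolding balancing_weights_def
proof (intro conjI ballI)
  fix x assume "x \<in> N"
  have "(\<Sum>S\<in>{S\<in>B. v S > 0}. v S * indicator S x) = (\<Sum>S\<in>B. v S * indicator S x)"
    using assms(1,2) by (intro sum.mono_neutral_left) (auto simp: order.order_iff_strict)
  then show "(\<Sum>S\<in>{S\<in>B. v S > 0}. v S * indicator S x) = 1"
    using assms(3) \<open>x \<in> N\<close> by simp
qed simp

lemma exists_step_to_boundary:
  fixes w d :: "'b \<Rightarrow> real"
  assumes "finite B" and "\<And>S. S \<in> B \<Longrightarrow> w S > 0" and "\<exists>S\<in>B. d S < 0"
  obtains t where "t > 0" and "\<And>S. S \<in> B \<Longrightarrow> w S + t * d S \<ge> 0"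
    and "\<exists>S\<in>B. w S + t * d S = 0"
proof -
  define D where "D = {S\<in>B. d S < 0}"
  have "finite D" "D \<noteq> {}" using assms(1,3) unfolding D_def by auto
  define t where "t = Min ((\<lambda>S. w S / - d S) ` D)"
  have "t \<in> (\<lambda>S. w S / - d S) ` D"
    unfolding t_def using \<open>finite D\<close> \<open>D \<noteq> {}\<close> by (intro Min_in) auto
  then obtain S1 where "S1 \<in> D" and t_S1: "t = w S1 / - d S1" by blast
  have t_le: "t \<le> w S / - d S" if "S \<in> D" for S
    using \<open>finite D\<close> that unfolding t_def by simp
  show thesis
  proof
    show "t > 0" using t_S1 \<open>S1 \<in> D\<close> assms(2) unfolding D_def by (simp add: divide_pos_neg)
    show "w S + t * d S \<ge> 0" if "S \<in> B" for S
    proof (cases "d S < 0")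
      case True
      then have "- d S > 0" and "t \<le> w S / - d S"
        using t_le[of S] that unfolding D_def by auto
      then have "t * - d S \<le> w S" using pos_le_divide_eq by blast
      then show ?thesis by simp
    next
      case False
      then show ?thesis using assms(2)[OF that] \<open>t > 0\<close> by simp
    qed
    show "\<exists>S\<in>B. w S + t * d S = 0"
      using \<open>S1 \<in> D\<close> t_S1 unfolding D_def by (intro bexI[of _ S1]) auto
  qed
qed

lemma balancing_weights_decrease_somewhere:
  assumes "balancing_weights N B w1" and "balancing_weights N B w2" and "finite B"
    and "S0 \<in> B" and "S0 \<noteq> {}" and "S0 \<subseteq> N" and "w1 S0 \<noteq> w2 S0"
  shows "\<exists>S\<in>B. w2 S < w1 S"
proof (rule ccontr)
  assume "\<not> ?thesis"
  then have ge: "\<And>S. S \<in> B \<Longrightarrow> w2 S - w1 S \<ge> 0" by force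
  obtain x where "x \<in> S0" using assms(5) by blast
  with assms(6) have "x \<in> N" by blast
  have "w2 S0 - w1 S0 = (w2 S0 - w1 S0) * indicator S0 x"
    using \<open>x \<in> S0\<close> by simp
  also have "\<dots> \<le> (\<Sum>S\<in>B. (w2 S - w1 S) * indicator S x)"
    using assms(3,4) ge by (intro member_le_sum) auto
  also have "\<dots> = (\<Sum>S\<in>B. w2 S * indicator S x) - (\<Sum>S\<in>B. w1 S * indicator S x)"
    by (simp add: left_diff_distrib sum_subtractf)
  also have "\<dots> = 0"
    using assms(1,2) \<open>x \<in> N\<close> unfolding balancing_weights_def by simp
  finally show False using ge[OF assms(4)] assms(7) by simp
qed

text \<open>If w1 and w2 differ, a suitable point of the line through them is a nonnegative
  solution with a zero coordinate, whose support is a balanced proper subcollection.\<close>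
lemma minimal_balanced_on_weights_unique:
  assumes "minimal_balanced_on N B"
    and "balancing_weights N B w1" and "balancing_weights N B w2" and "S0 \<in> B"
  shows "w1 S0 = w2 S0"
proof (rule ccontr)
  assume "w1 S0 \<noteq> w2 S0"
  have "balanced_on N B" using assms(1) unfolding minimal_balanced_on_def by simp
  then have "finite B" "finite N" and members: "\<And>S. S \<in> B \<Longrightarrow> S \<noteq> {} \<and> S \<subseteq> N"
    using balanced_on_finite_collection unfolding balanced_on_def by auto
  have "\<exists>S\<in>B. w2 S - w1 S < 0"
    using balancing_weights_decrease_somewhere[OF assms(2,3) \<open>finite B\<close> assms(4)]
      members[OF assms(4)] \<open>w1 S0 \<noteq> w2 S0\<close> by auto
  moreover have "\<And>S. S \<in> B \<Longrightarrow> w1 S > 0"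
    using assms(2) unfolding balancing_weights_def by simp
  ultimately obtain t where "t > 0" and nonneg: "\<And>S. S \<in> B \<Longrightarrow> w1 S + t * (w2 S - w1 S) \<ge> 0"
    and zero: "\<exists>S\<in>B. w1 S + t * (w2 S - w1 S) = 0"
    using exists_step_to_boundary[OF \<open>finite B\<close>, of w1 "\<lambda>S. w2 S - w1 S"] by blast
  define v where "v S = w1 S + t * (w2 S - w1 S)" for S
  have "(\<Sum>S\<in>B. v S * indicator S x) = 1" if "x \<in> N" for x
  proof -
    have "(\<Sum>S\<in>B. v S * indicator S x)
        = (\<Sum>S\<in>B. (1 - t) * (w1 S * indicator S x) + t * (w2 S * indicator S x))"
      unfolding v_def by (intro sum.cong) (simp_all add: algebra_simps)
    also have "\<dots> = (1 - t) * (\<Sum>S\<in>B. w1 S * indicator S x)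
        + t * (\<Sum>S\<in>B. w2 S * indicator S x)"
      by (simp only: sum.distrib sum_distrib_left)
    finally show ?thesis using assms(2,3) that unfolding balancing_weights_def by simp
  qed
  with nonneg have "balancing_weights N {S\<in>B. v S > 0} v"
    unfolding v_def by (rule balancing_weights_positive_part[OF \<open>finite B\<close>])
  then have "balanced_on N {S\<in>B. v S > 0}"
    using \<open>finite N\<close> members unfolding balanced_on_def by blast
  moreover have "{S\<in>B. v S > 0} \<subset> B"
  proof -
    from zero obtain S1 where "S1 \<in> B" and "v S1 = 0" unfolding v_def by blast
    then show ?thesis by force
  qed
  ultimately show False using assms(1) unfolding minimal_balanced_on_def by blast
qed

definition lift_by :: "'a \<Rightarrow> 'a set set \<Rightarrow> 'a set \<Rightarrow> 'a set" where
  "lift_by p A S = (if S \<in> A then insert p S else S)"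

definition point_extension :: "'a \<Rightarrow> 'a set set \<Rightarrow> 'a set set \<Rightarrow> 'a set set" where
  "point_extension p A B = insert {p} (lift_by p A ` B)"

definition point_extension_weights ::
    "'a \<Rightarrow> 'a set set \<Rightarrow> ('a set \<Rightarrow> real) \<Rightarrow> 'a set \<Rightarrow> real" where
  "point_extension_weights p A w T =
     (if T = {p} then 1 - sum w A else if p \<in> T then w (T - {p}) else w T)"

locale one_point_extension =
  fixes N :: "'a set" and B A :: "'a set set" and p :: 'a
  assumes finite_ground: "finite N"
    and members: "\<And>S. S \<in> B \<Longrightarrow> S \<noteq> {} \<and> S \<subseteq> N"
    and point_new: "p \<notin> N"
    and lifted_subset: "A \<subseteq> B"
begin

abbreviation lift :: "'a set \<Rightarrow> 'a set" where
  "lift \<equiv> lift_by p A"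

lemma finite_collection: "finite B"
  by (rule finite_subset[of B "Pow N"]) (use members finite_ground in auto)

lemma point_notin_member: "S \<in> B \<Longrightarrow> p \<notin> S"
  using members point_new by blast

lemma lift_remove_point: "S \<in> B \<Longrightarrow> lift S - {p} = S"
  using point_notin_member unfolding lift_by_def by auto

lemma inj_on_lift: "inj_on lift B"
  by (rule inj_on_inverseI[where g = "\<lambda>T. T - {p}"]) (rule lift_remove_point)

lemma lift_ne_point: "S \<in> B \<Longrightarrow> lift S \<noteq> {p}"
  using lift_remove_point members by fastforce

lemma indicator_lift_other: "x \<noteq> p \<Longrightarrow> indicator (lift S) x = indicator S x"
  unfolding lift_by_def by (simp add: indicator_def)

lemma indicator_lift_point: "S \<in> B \<Longrightarrow> indicator (lift S) p = indicator A S"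
  using point_notin_member unfolding lift_by_def by (simp add: indicator_def)

lemma weights_lift: "S \<in> B \<Longrightarrow> point_extension_weights p A w (lift S) = w S"
  using lift_ne_point lift_remove_point point_notin_member
  unfolding point_extension_weights_def lift_by_def by auto

lemma lift_image: "lift ` B = insert p ` A \<union> (B - A)"
  using lifted_subset unfolding lift_by_def by auto

lemma finite_point_extension: "finite (point_extension p A B)"
  using finite_collection unfolding point_extension_def by simp

lemma sum_lift_image:
  "B' \<subseteq> B \<Longrightarrow> (\<Sum>T\<in>lift ` B'. f T) = (\<Sum>S\<in>B'. f (lift S))"
  using sum.reindex[OF inj_on_subset[OF inj_on_lift]] by simp

lemma sum_point_extension:
  "(\<Sum>T\<in>point_extension p A B. f T) = (\<Sum>S\<in>B. f (lift S)) + f {p}"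
  using lift_ne_point finite_collection sum_lift_image[of B f]
  unfolding point_extension_def by (subst sum.insert) (auto simp: add.commute)

lemma sum_indicator_lifted_point:
  fixes w :: "'a set \<Rightarrow> real"
  shows "(\<Sum>S\<in>B. w S * indicator (lift S) p) = sum w A"
proof -
  have "(\<Sum>S\<in>B. w S * indicator (lift S) p) = (\<Sum>S\<in>B. if S \<in> A then w S else 0)"
    by (intro sum.cong) (auto simp: indicator_lift_point)
  also have "\<dots> = sum w A"
    using sum.inter_restrict[OF finite_collection, of w A] lifted_subset
    by (simp add: Int_absorb1)
  finally show ?thesis .
qed

lemma balancing_weights_point_extension:
  assumes "balancing_weights N B w" and "sum w A < 1"
  shows "balancing_weights (insert p N) (point_extension p A B) (point_extension_weights p A w)"
  unfolding balancing_weights_def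
proof (intro conjI ballI)
  fix T assume "T \<in> point_extension p A B"
  then consider "T = {p}" | S where "S \<in> B" and "T = lift S"
    unfolding point_extension_def by blast
  then show "point_extension_weights p A w T > 0"
  proof cases
    case 1
    then show ?thesis using assms(2) by (simp add: point_extension_weights_def)
  next
    case 2
    then show ?thesis using assms(1) weights_lift unfolding balancing_weights_def by simp
  qed
next
  fix x assume "x \<in> insert p N"
  have "(\<Sum>S\<in>B. point_extension_weights p A w (lift S) * indicator (lift S) x)
      = (\<Sum>S\<in>B. w S * indicator (lift S) x)"
    by (intro sum.cong) (simp_all add: weights_lift)
  then have split: "(\<Sum>T\<in>point_extension p A B. point_extension_weights p A w T * indicator T x)
      = (\<Sum>S\<in>B. w S * indicator (lift S) x) + (1 - sum w A) * indicator {p} x"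
    unfolding sum_point_extension by (simp add: point_extension_weights_def)
  show "(\<Sum>T\<in>point_extension p A B. point_extension_weights p A w T * indicator T x) = 1"
  proof (cases "x = p")
    case True
    then show ?thesis using split sum_indicator_lifted_point by simp
  next
    case False
    with \<open>x \<in> insert p N\<close> have "x \<in> N" by simp
    with False assms(1) show ?thesis
      unfolding split balancing_weights_def by (simp add: indicator_lift_other)
  qed
qed

lemma point_extension_members:
  assumes "T \<in> point_extension p A B"
  shows "T \<noteq> {} \<and> T \<subseteq> insert p N"
proof -
  consider "T = {p}" | S where "S \<in> B" and "T = lift S"
    using assms unfolding point_extension_def by blast
  then show ?thesis
  proof cases
    case 1
    then show ?thesis by simp
  next
    case 2
    then show ?thesis using members[of S] unfolding lift_by_def by auto
  qed
qed

lemma balancing_weights_unlift: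
  assumes "B' \<subseteq> point_extension p A B" and "balancing_weights (insert p N) B' v"
  shows "balancing_weights N {S\<in>B. lift S \<in> B'} (v \<circ> lift)"
  unfolding balancing_weights_def
proof (intro conjI ballI)
  fix S assume "S \<in> {S\<in>B. lift S \<in> B'}"
  then show "(v \<circ> lift) S > 0" using assms(2) unfolding balancing_weights_def by simp
next
  fix x assume "x \<in> N"
  then have "x \<noteq> p" using point_new by blast
  have "B' - {{p}} = lift ` {S\<in>B. lift S \<in> B'}"
    using assms(1) lift_ne_point unfolding point_extension_def by auto
  then have "(\<Sum>S\<in>{S\<in>B. lift S \<in> B'}. (v \<circ> lift) S * indicator S x)
      = (\<Sum>T\<in>B' - {{p}}. v T * indicator T x)"
    by (simp add: sum_lift_image indicator_lift_other[OF \<open>x \<noteq> p\<close>])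
  also have "\<dots> = (\<Sum>T\<in>B'. v T * indicator T x)"
    using \<open>x \<noteq> p\<close> finite_subset[OF assms(1) finite_point_extension]
    by (intro sum.mono_neutral_left) (auto simp: indicator_def)
  also have "\<dots> = 1" using assms(2) \<open>x \<in> N\<close> unfolding balancing_weights_def by simp
  finally show "(\<Sum>S\<in>{S\<in>B. lift S \<in> B'}. (v \<circ> lift) S * indicator S x) = 1" .
qed

lemma minimal_balanced_on_point_extension:
  assumes minimal: "minimal_balanced_on N B"
    and w: "balancing_weights N B w" and "sum w A < 1"
  shows "minimal_balanced_on (insert p N) (point_extension p A B)"
  unfolding minimal_balanced_on_def
proof (intro conjI allI impI)
  show "balanced_on (insert p N) (point_extension p A B)"
    unfolding balanced_on_def using finite_ground point_extension_members
      balancing_weights_point_extension[OF w \<open>sum w A < 1\<close>] by blast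
next
  fix B' assume proper: "B' \<subset> point_extension p A B"
  show "\<not> balanced_on (insert p N) B'"
  proof
    assume "balanced_on (insert p N) B'"
    then obtain v where v: "balancing_weights (insert p N) B' v"
      unfolding balanced_on_def by blast
    let ?J = "{S\<in>B. lift S \<in> B'}"
    have J_weights: "balancing_weights N ?J (v \<circ> lift)"
      using balancing_weights_unlift proper v by blast
    then have "balanced_on N ?J"
      using finite_ground members unfolding balanced_on_def by blast
    then have "\<not> ?J \<subset> B" using minimal unfolding minimal_balanced_on_def by blast
    then have "?J = B" by blast
    then have "lift ` B \<subseteq> B'" by blast
    with proper have "{p} \<notin> B'" and "B' = lift ` B"
      unfolding point_extension_def by auto
    have v_lift: "v (lift S) = w S" if "S \<in> B" for S
      using minimal_balanced_on_weights_unique[OF minimal _ w that] J_weights \<open>?J = B\<close> by simp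
    have "1 = (\<Sum>T\<in>lift ` B. v T * indicator T p)"
      using v \<open>B' = lift ` B\<close> unfolding balancing_weights_def by simp
    also have "\<dots> = sum w A"
      by (simp add: sum_lift_image v_lift sum_indicator_lifted_point)
    finally show False using \<open>sum w A < 1\<close> by simp
  qed
qed

end

theorem lemma4p2:
  fixes N :: "'a set" and p :: 'a and k :: nat and S :: "nat \<Rightarrow> 'a set"
    and lam :: "'a set \<Rightarrow> real" and I :: "nat set"
  assumes "finite N" and "N \<noteq> {}" and "p \<notin> N"
    and "inj_on S {1..k}"
    and "minimal_balanced_on N (S ` {1..k})"
    and "balancing_weights N (S ` {1..k}) lam"
    and "I \<subseteq> {1..k}"
    and "(\<Sum>i\<in>I. lam (S i)) < 1"
  shows "minimal_balanced_on (insert p N)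
           ((\<lambda>i. S i \<union> {p}) ` I \<union> S ` ({1..k} - I) \<union> {{p}})
       \<and> balancing_weights (insert p N)
           ((\<lambda>i. S i \<union> {p}) ` I \<union> S ` ({1..k} - I) \<union> {{p}})
           (\<lambda>T. if T = {p} then 1 - (\<Sum>i\<in>I. lam (S i))
                else if p \<in> T then lam (T - {p}) else lam T)"
proof -
  interpret one_point_extension N "S ` {1..k}" "S ` I" p
    using assms(1,3,5,7) unfolding minimal_balanced_on_def balanced_on_def
    by unfold_locales auto
  have sum_A: "sum lam (S ` I) = (\<Sum>i\<in>I. lam (S i))"
    using sum.reindex[OF inj_on_subset[OF assms(4,7)]] by simp
  with assms(8) have "sum lam (S ` I) < 1" by simp
  have collection: "point_extension p (S ` I) (S ` {1..k})
      = (\<lambda>i. S i \<union> {p}) ` I \<union> S ` ({1..k} - I) \<union> {{p}}"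
  proof -
    have lifted: "insert p ` S ` I = (\<lambda>i. S i \<union> {p}) ` I" by auto
    have unlifted: "S ` {1..k} - S ` I = S ` ({1..k} - I)"
      using inj_on_image_set_diff[OF assms(4) Diff_subset assms(7)] by simp
    show ?thesis unfolding point_extension_def lift_image lifted unlifted by simp
  qed
  have weights: "point_extension_weights p (S ` I) lam
      = (\<lambda>T. if T = {p} then 1 - (\<Sum>i\<in>I. lam (S i)) else if p \<in> T then lam (T - {p}) else lam T)"
    unfolding point_extension_weights_def sum_A ..
  show ?thesis
    using minimal_balanced_on_point_extension[OF assms(5,6) \<open>sum lam (S ` I) < 1\<close>]
      balancing_weights_point_extension[OF assms(6) \<open>sum lam (S ` I) < 1\<close>]
    unfolding collection weights by (rule conjI)
qed

end
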